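(* Consider the following static pricing game. There are $n$ firms $i \in N = \{1,\dots,n\}$, each with marginal cost $c_i = 0$, selling a homogeneous good. A single buyer has willingness to pay (WTP) $\omega \in \Omega = \{\omega_1,\dots,\omega_m\}$, drawn from a distribution $F$. An information structure $\langle S,\mu\rangle$ is given, where $S = \prod_{i\in N} S_i$ is a finite signal space and $\mu$ is a joint distribution on $S \times \Omega$ whose marginal on $\Omega$ is $F$; upon realization of $\omega$, the signal profile $s=(s_1,\dots,s_n)$ is drawn from $\mu(\cdot\mid\omega)$ and firm $i$ privately observes $s_i$. Each firm $i$ chooses a price $p_i(s_i) \in \mathbb{R}$ as a function of its signal. Demand for firm $i$ is $q_i = 1$ if $p_i \le \omega$ and $p_i = \min_{j\in N} p_j$, with ties among firms quoting the same lowest price resolved uniformly at random, and $q_i = 0$ otherwise; firm $i$'s payoff is $\pi_i = p_i q_i$. Suppose the action space is $\mathbb{R}$ and that $F$ and the information structure $\langle S,\mu\rangle$ are common knowledge. Then: (1) There exists a Bayesian Nash equilibrium in which every player quotes price $p^N = 0$ under every signal. Furthermore, in every Bayesian Nash equilibrium, every player receives $0$ (expected) profit. (2) In the two-player case ($n=2$), the Bayesian Nash equilibrium described in (1) (every player quoting $0$ under every signal) is the unique Bayesian Nash equilibrium. (3) In the monopoly case ($n=1$, where the single firm sells iff $p \le \omega$), the optimal pricing strategy of the firm under any signal $s$ is $p^M(s) = \arg\max_p \, p \cdot \operatorname{Prob}(\omega \ge p \mid s)$.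
   Context: A Bayesian Nash equilibrium is a profile of signal-contingent pricing strategies $(p_i : S_i \to \mathbb{R})_{i\in N}$ such that, for every firm $i$ and every signal $s_i$ received with positive probability, $p_i(s_i)$ maximizes firm $i$'s expected payoff conditional on $s_i$, given the other firms' strategies, with expectations taken under $\mu$. *)

theory Defs
  imports "HOL-Probability.Probability"
begin

text \<open>Firms are indexed by 0..n-1 (i.e. N = {..<n}). A signal profile is a function
  nat => 's (only the coordinates below n matter); an information structure is a
  finitely supported joint distribution mu on signal profiles times WTP.\<close>

definition demand :: "nat \<Rightarrow> (nat \<Rightarrow> real) \<Rightarrow> real \<Rightarrow> nat \<Rightarrow> real" where
  "demand n p \<omega> i =
     (if p i \<le> \<omega> \<and> (\<forall>j<n. p i \<le> p j)
      then 1 / real (card {j. j < n \<and> p j = p i}) else 0)"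
  \<comment> \<open>expected quantity: uniform random tie-breaking among lowest-price firms\<close>

definition payoff :: "nat \<Rightarrow> (nat \<Rightarrow> real) \<Rightarrow> real \<Rightarrow> nat \<Rightarrow> real" where
  "payoff n p \<omega> i = p i * demand n p \<omega> i"

definition sig_event :: "nat \<Rightarrow> 's \<Rightarrow> ((nat \<Rightarrow> 's) \<times> real) set" where
  "sig_event i t = {x. fst x i = t}"

definition pos_signal :: "((nat \<Rightarrow> 's) \<times> real) pmf \<Rightarrow> nat \<Rightarrow> 's \<Rightarrow> bool" where
  "pos_signal \<mu> i t \<longleftrightarrow> measure_pmf.prob \<mu> (sig_event i t) > 0"

definition interim_payoff ::
  "nat \<Rightarrow> ((nat \<Rightarrow> 's) \<times> real) pmf \<Rightarrow> (nat \<Rightarrow> 's \<Rightarrow> real) \<Rightarrow> nat \<Rightarrow> 's \<Rightarrow> real \<Rightarrow> real" where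
  "interim_payoff n \<mu> \<sigma> i t q =
     measure_pmf.expectation (cond_pmf \<mu> (sig_event i t))
       (\<lambda>(s, \<omega>). payoff n (\<lambda>j. if j = i then q else \<sigma> j (s j)) \<omega> i)"

definition BNE :: "nat \<Rightarrow> ((nat \<Rightarrow> 's) \<times> real) pmf \<Rightarrow> (nat \<Rightarrow> 's \<Rightarrow> real) \<Rightarrow> bool" where
  "BNE n \<mu> \<sigma> \<longleftrightarrow>
     (\<forall>i<n. \<forall>t. pos_signal \<mu> i t \<longrightarrow>
        (\<forall>q. interim_payoff n \<mu> \<sigma> i t q \<le> interim_payoff n \<mu> \<sigma> i t (\<sigma> i t)))"

definition exp_profit :: "nat \<Rightarrow> ((nat \<Rightarrow> 's) \<times> real) pmf \<Rightarrow> (nat \<Rightarrow> 's \<Rightarrow> real) \<Rightarrow> nat \<Rightarrow> real" where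
  "exp_profit n \<mu> \<sigma> i =
     measure_pmf.expectation \<mu> (\<lambda>(s, \<omega>). payoff n (\<lambda>j. \<sigma> j (s j)) \<omega> i)"

definition monopoly_obj :: "((nat \<Rightarrow> 's) \<times> real) pmf \<Rightarrow> 's \<Rightarrow> real \<Rightarrow> real" where
  "monopoly_obj \<mu> t p = p * measure_pmf.prob (cond_pmf \<mu> (sig_event 0 t)) {x. snd x \<ge> p}"

end

theory Submission
  imports Defs
begin

text \<open>Quoting 0 is always safe, so in equilibrium no firm sells at a negative price.  With at
  least two firms, suppose some firm makes a sale at a non-zero price and take the highest such
  price.  If a rival ties with it, the seller could undercut slightly and gain the rival's share;
  otherwise every rival prices above it and earns nothing under its signal, while undercutting
  it would earn a positive amount.  So all equilibrium payoffs vanish.  With two firms and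
  positive willingness to pay, the same undercutting argument forces both prices to be
  non-positive in every state, and a negative price would then sell at a loss, so all prices
  are 0.  A monopolist's interim payoff is exactly p * Prob(omega \<ge> p | s), maximised at 0 or
  at one of the finitely many values of omega.\<close>

lemma finite_obtains_arg_max:
  fixes f :: "'a \<Rightarrow> 'b::linorder"
  assumes "finite A" "A \<noteq> {}"
  obtains a where "a \<in> A" "\<And>b. b \<in> A \<Longrightarrow> f b \<le> f a"
proof -
  have "Max (f ` A) \<in> f ` A"
    using assms by simp
  then obtain a where a: "a \<in> A" "Max (f ` A) = f a"
    by blast
  show thesis
  proof (rule that[OF a(1)])
    fix b
    assume "b \<in> A"
    then show "f b \<le> f a"
      using assms a(2) by (metis Max_ge finite_imageI imageI)
  qed
qed

section \<open>Demand and payoff\<close>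

lemma card_ties_pos: "(i::nat) < n \<Longrightarrow> 0 < card {j. j < n \<and> p j = p i}"
  by (subst card_gt_0_iff) auto

lemma demand_nonneg: "0 \<le> demand n p \<omega> i"
  unfolding demand_def by simp

lemma demand_le_1: "i < n \<Longrightarrow> demand n p \<omega> i \<le> 1"
  using card_ties_pos[of i n p] unfolding demand_def by auto

lemma demand_pos_iff: "i < n \<Longrightarrow> 0 < demand n p \<omega> i \<longleftrightarrow> p i \<le> \<omega> \<and> (\<forall>j<n. p i \<le> p j)"
  using card_ties_pos[of i n p] unfolding demand_def by auto

lemma demand_tie_le_half:
  assumes "i < n" "j < n" "j \<noteq> i" "p j = p i"
  shows "demand n p \<omega> i \<le> 1 / 2"
proof -
  have "card {i, j} \<le> card {l. l < n \<and> p l = p i}"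
    using assms by (intro card_mono) auto
  then show ?thesis
    using assms(3) unfolding demand_def by (auto simp: field_simps)
qed

lemma demand_unique_lowest:
  assumes "i < n" "p i \<le> \<omega>" "\<forall>j<n. j \<noteq> i \<longrightarrow> p i < p j"
  shows "demand n p \<omega> i = 1"
proof -
  have "{j. j < n \<and> p j = p i} = {i}"
    using assms by force
  then show ?thesis
    using assms unfolding demand_def by (auto simp: less_imp_le)
qed

lemma payoff_nonneg: "0 \<le> p i \<Longrightarrow> 0 \<le> payoff n p \<omega> i"
  unfolding payoff_def by (simp add: demand_nonneg)

lemma payoff_nonpos: "p i \<le> 0 \<Longrightarrow> payoff n p \<omega> i \<le> 0"
  unfolding payoff_def by (simp add: demand_nonneg mult_nonpos_nonneg)

lemma payoff_nonzero_iff: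
  "i < n \<Longrightarrow> payoff n p \<omega> i \<noteq> 0 \<longleftrightarrow> p i \<noteq> 0 \<and> p i \<le> \<omega> \<and> (\<forall>j<n. p i \<le> p j)"
  using demand_pos_iff[of i n p \<omega>] demand_nonneg[of n p \<omega> i] unfolding payoff_def by auto

lemma payoff_monopoly: "payoff 1 p \<omega> 0 = (if p 0 \<le> \<omega> then p 0 else 0)"
proof -
  have "{j. j < (1::nat) \<and> p j = p 0} = {0}"
    by auto
  then show ?thesis
    unfolding payoff_def demand_def by auto
qed

section \<open>Finite pmfs\<close>

lemma expectation_mono_pmf:
  fixes f g :: "'a \<Rightarrow> real"
  assumes "finite (set_pmf P)" "\<And>x. x \<in> set_pmf P \<Longrightarrow> f x \<le> g x"
  shows "measure_pmf.expectation P f \<le> measure_pmf.expectation P g"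
  using assms by (intro integral_mono_AE integrable_measure_pmf_finite AE_pmfI)

lemma expectation_less_pmf:
  fixes f g :: "'a \<Rightarrow> real"
  assumes fin: "finite (set_pmf P)" and le: "\<And>x. x \<in> set_pmf P \<Longrightarrow> f x \<le> g x"
    and x: "x \<in> set_pmf P" and less: "f x < g x"
  shows "measure_pmf.expectation P f < measure_pmf.expectation P g"
proof -
  have "0 < (g x - f x) * pmf P x"
    using x less by (simp add: pmf_positive)
  also have "\<dots> = measure_pmf.expectation P (\<lambda>y. (g x - f x) * indicator {x} y)"
    by (simp add: measure_pmf_single)
  also have "\<dots> \<le> measure_pmf.expectation P (\<lambda>y. g y - f y)"
    using le less by (intro expectation_mono_pmf[OF fin]) (auto split: split_indicator)
  also have "\<dots> = measure_pmf.expectation P g - measure_pmf.expectation P f"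
    using fin by (intro Bochner_Integration.integral_diff integrable_measure_pmf_finite)
  finally show ?thesis
    by simp
qed

lemma price_times_survival_has_max:
  fixes P :: "'a pmf" and v :: "'a \<Rightarrow> real"
  assumes fin: "finite (set_pmf P)"
  shows "\<exists>p. \<forall>q. q * measure_pmf.prob P {x. q \<le> v x} \<le> p * measure_pmf.prob P {x. p \<le> v x}"
proof -
  define r where "r q = q * measure_pmf.prob P {x. q \<le> v x}" for q
  define V where "V = v ` set_pmf P"
  have fin_V: "finite V"
    using fin unfolding V_def by simp
  obtain p where p_max: "\<And>c. c \<in> insert 0 V \<Longrightarrow> r c \<le> r p"
    using finite_obtains_arg_max[of "insert 0 V" r] fin_V by blast
  have "r q \<le> r p" for q
  proof (cases "0 < q \<and> (\<exists>c\<in>V. q \<le> c)")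
    case True
    \<comment> \<open>Raising q to the next value of v in the support loses no sales.\<close>
    define c where "c = Min {c \<in> V. q \<le> c}"
    have "c \<in> {c \<in> V. q \<le> c}"
      unfolding c_def using True fin_V by (intro Min_in) auto
    then have c: "c \<in> V" "q \<le> c"
      by auto
    have "c \<le> v x" if "x \<in> set_pmf P" "q \<le> v x" for x
      unfolding c_def using that fin_V by (intro Min_le) (auto simp: V_def)
    then have "{x. q \<le> v x} \<inter> set_pmf P = {x. c \<le> v x} \<inter> set_pmf P"
      using c(2) by auto
    then have "measure_pmf.prob P {x. q \<le> v x} = measure_pmf.prob P {x. c \<le> v x}"
      by (metis measure_Int_set_pmf)
    then have "r q \<le> r c"
      using c(2) unfolding r_def by (simp add: mult_right_mono)
    also have "\<dots> \<le> r p"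
      using c(1) by (intro p_max) simp
    finally show ?thesis .
  next
    case False
    then have "q \<le> 0 \<or> set_pmf P \<inter> {x. q \<le> v x} = {}"
      unfolding V_def by auto
    then have "r q \<le> 0"
      unfolding r_def by (auto simp: measure_pmf_zero_iff[THEN iffD2] mult_nonpos_nonneg)
    also have "0 \<le> r p"
      using p_max[of 0] unfolding r_def by simp
    finally show ?thesis .
  qed
  then show ?thesis
    unfolding r_def by blast
qed

section \<open>Signals and interim payoffs\<close>

lemma pos_signal_iff: "pos_signal \<mu> i t \<longleftrightarrow> (\<exists>x\<in>set_pmf \<mu>. fst x i = t)"
  unfolding pos_signal_def sig_event_def
  by (auto simp: measure_pmf_posI zero_less_measure_iff measure_pmf_zero_iff)

lemma set_cond_signal:
  "pos_signal \<mu> i t \<Longrightarrow> set_pmf (cond_pmf \<mu> (sig_event i t)) = {x \<in> set_pmf \<mu>. fst x i = t}"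
  unfolding pos_signal_iff by (subst set_cond_pmf) (auto simp: sig_event_def)

lemma finite_cond_signal:
  "finite (set_pmf \<mu>) \<Longrightarrow> pos_signal \<mu> i t \<Longrightarrow> finite (set_pmf (cond_pmf \<mu> (sig_event i t)))"
  by (simp add: set_cond_signal)

lemma interim_payoff_own_price:
  assumes "pos_signal \<mu> i t"
  shows "interim_payoff n \<mu> \<sigma> i t (\<sigma> i t) =
    measure_pmf.expectation (cond_pmf \<mu> (sig_event i t)) (\<lambda>y. payoff n (\<lambda>j. \<sigma> j (fst y j)) (snd y) i)"
  unfolding interim_payoff_def
proof (intro integral_cong_AE AE_pmfI)
  fix x
  assume "x \<in> set_pmf (cond_pmf \<mu> (sig_event i t))"
  then have "(\<lambda>j. if j = i then \<sigma> i t else \<sigma> j (fst x j)) = (\<lambda>j. \<sigma> j (fst x j))"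
    using set_cond_signal[OF assms] by auto
  then show "(case x of (s, \<omega>) \<Rightarrow> payoff n (\<lambda>j. if j = i then \<sigma> i t else \<sigma> j (s j)) \<omega> i) =
      payoff n (\<lambda>j. \<sigma> j (fst x j)) (snd x) i"
    by (simp add: case_prod_beta)
qed simp_all

lemma interim_payoff_own_eq_0:
  assumes "pos_signal \<mu> i t"
    and "\<And>y. y \<in> set_pmf \<mu> \<Longrightarrow> fst y i = t \<Longrightarrow> payoff n (\<lambda>j. \<sigma> j (fst y j)) (snd y) i = 0"
  shows "interim_payoff n \<mu> \<sigma> i t (\<sigma> i t) = 0"
proof -
  have "interim_payoff n \<mu> \<sigma> i t (\<sigma> i t) = measure_pmf.expectation (cond_pmf \<mu> (sig_event i t)) (\<lambda>_. 0)"
    unfolding interim_payoff_own_price[OF assms(1)]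
    by (intro integral_cong_AE AE_pmfI) (simp_all add: set_cond_signal[OF assms(1)] assms(2))
  then show ?thesis
    by simp
qed

lemma interim_payoff_zero_price: "interim_payoff n \<mu> \<sigma> i t 0 = 0"
  unfolding interim_payoff_def payoff_def by (simp add: case_prod_unfold)

lemma interim_payoff_monopoly: "interim_payoff 1 \<mu> \<sigma> 0 t q = monopoly_obj \<mu> t q"
proof -
  have "payoff 1 (\<lambda>j. if j = 0 then q else \<sigma> j (s j)) \<omega> 0 = q * indicator {x. q \<le> snd x} (s, \<omega>)"
    for s \<omega>
    by (simp add: payoff_monopoly[unfolded One_nat_def] indicator_def)
  then show ?thesis
    unfolding interim_payoff_def monopoly_obj_def by (simp add: case_prod_unfold)
qed

section \<open>Equilibrium analysis\<close>

text \<open>The states in which every price in (0, p) wins firm i the whole market.\<close>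

definition undercut_event ::
  "nat \<Rightarrow> (nat \<Rightarrow> 's \<Rightarrow> real) \<Rightarrow> nat \<Rightarrow> real \<Rightarrow> ((nat \<Rightarrow> 's) \<times> real) set" where
  "undercut_event n \<sigma> i p = {(s, \<omega>). p \<le> \<omega> \<and> (\<forall>j<n. j \<noteq> i \<longrightarrow> p \<le> \<sigma> j (s j))}"

lemma mem_undercut_event:
  "x \<in> undercut_event n \<sigma> i p \<longleftrightarrow> p \<le> snd x \<and> (\<forall>j<n. j \<noteq> i \<longrightarrow> p \<le> \<sigma> j (fst x j))"
  by (simp add: undercut_event_def case_prod_beta)

lemma BNE_interim_nonneg:
  assumes "BNE n \<mu> \<sigma>" "i < n" "pos_signal \<mu> i t"
  shows "0 \<le> interim_payoff n \<mu> \<sigma> i t (\<sigma> i t)"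
  using assms interim_payoff_zero_price[of n \<mu> \<sigma> i t] unfolding BNE_def by metis

lemma BNE_undercut_bound:
  assumes bne: "BNE n \<mu> \<sigma>" and fin: "finite (set_pmf \<mu>)" and i: "i < n"
    and t: "pos_signal \<mu> i t" and pb: "0 < pb"
  shows "pb * measure_pmf.prob (cond_pmf \<mu> (sig_event i t)) (undercut_event n \<sigma> i pb)
    \<le> interim_payoff n \<mu> \<sigma> i t (\<sigma> i t)"
proof (rule field_le_mult_one_interval)
  fix z :: real
  assume z: "0 < z" "z < 1"
  define q where "q = z * pb"
  define W where "W = undercut_event n \<sigma> i pb"
  have q: "0 < q" "q < pb"
    using z pb by (simp_all add: q_def)
  have dev: "q * indicator W x \<le> payoff n (\<lambda>j. if j = i then q else \<sigma> j (fst x j)) (snd x) i" for x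
  proof (cases "x \<in> W")
    case True
    then have "demand n (\<lambda>j. if j = i then q else \<sigma> j (fst x j)) (snd x) i = 1"
      using q i by (intro demand_unique_lowest) (auto simp: W_def mem_undercut_event)
    then show ?thesis
      using True by (simp add: payoff_def)
  next
    case False
    then show ?thesis
      using q by (simp add: payoff_nonneg)
  qed
  have "z * (pb * measure_pmf.prob (cond_pmf \<mu> (sig_event i t)) W)
      = measure_pmf.expectation (cond_pmf \<mu> (sig_event i t)) (\<lambda>x. q * indicator W x)"
    by (simp add: q_def)
  also have "\<dots> \<le> interim_payoff n \<mu> \<sigma> i t q"
    unfolding interim_payoff_def using dev
    by (intro expectation_mono_pmf[OF finite_cond_signal[OF fin t]]) (simp add: case_prod_beta)
  also have "\<dots> \<le> interim_payoff n \<mu> \<sigma> i t (\<sigma> i t)"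
    using bne i t unfolding BNE_def by blast
  finally show "z * (pb * measure_pmf.prob (cond_pmf \<mu> (sig_event i t)) (undercut_event n \<sigma> i pb))
      \<le> interim_payoff n \<mu> \<sigma> i t (\<sigma> i t)"
    unfolding W_def .
qed

lemma BNE_interim_pos:
  assumes bne: "BNE n \<mu> \<sigma>" and fin: "finite (set_pmf \<mu>)" and i: "i < n"
    and x: "x \<in> set_pmf \<mu>" and pb: "0 < pb" and W: "x \<in> undercut_event n \<sigma> i pb"
  shows "0 < interim_payoff n \<mu> \<sigma> i (fst x i) (\<sigma> i (fst x i))"
proof -
  have t: "pos_signal \<mu> i (fst x i)"
    using x by (auto simp: pos_signal_iff)
  have "0 < measure_pmf.prob (cond_pmf \<mu> (sig_event i (fst x i))) (undercut_event n \<sigma> i pb)"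
    using x W by (intro measure_pmf_posI) (simp_all add: set_cond_signal[OF t])
  then have "0 < pb * measure_pmf.prob (cond_pmf \<mu> (sig_event i (fst x i))) (undercut_event n \<sigma> i pb)"
    using pb by simp
  also have "\<dots> \<le> interim_payoff n \<mu> \<sigma> i (fst x i) (\<sigma> i (fst x i))"
    by (rule BNE_undercut_bound[OF bne fin i t pb])
  finally show ?thesis .
qed

lemma BNE_sale_price_pos:
  assumes bne: "BNE n \<mu> \<sigma>" and fin: "finite (set_pmf \<mu>)" and i: "i < n"
    and x: "x \<in> set_pmf \<mu>" and sale: "payoff n (\<lambda>j. \<sigma> j (fst x j)) (snd x) i \<noteq> 0"
  shows "0 < \<sigma> i (fst x i)"
proof (rule ccontr)
  define t where "t = fst x i"
  define P where "P = cond_pmf \<mu> (sig_event i t)"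
  assume "\<not> 0 < \<sigma> i (fst x i)"
  then have neg: "\<sigma> i t \<le> 0"
    by (simp add: t_def)
  have t: "pos_signal \<mu> i t"
    using x by (auto simp: pos_signal_iff t_def)
  have supp: "set_pmf P = {y \<in> set_pmf \<mu>. fst y i = t}"
    unfolding P_def by (rule set_cond_signal[OF t])
  have "interim_payoff n \<mu> \<sigma> i t (\<sigma> i t)
      = measure_pmf.expectation P (\<lambda>y. payoff n (\<lambda>j. \<sigma> j (fst y j)) (snd y) i)"
    unfolding interim_payoff_own_price[OF t] P_def ..
  also have "\<dots> < measure_pmf.expectation P (\<lambda>_. 0)"
  proof (rule expectation_less_pmf)
    show "finite (set_pmf P)"
      unfolding P_def by (rule finite_cond_signal[OF fin t])
    show "payoff n (\<lambda>j. \<sigma> j (fst y j)) (snd y) i \<le> 0" if "y \<in> set_pmf P" for y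
      using that neg by (intro payoff_nonpos) (simp add: supp)
    show "x \<in> set_pmf P"
      using x by (simp add: supp t_def)
    show "payoff n (\<lambda>j. \<sigma> j (fst x j)) (snd x) i < 0"
      using sale neg payoff_nonpos[of "\<lambda>j. \<sigma> j (fst x j)" i n "snd x"]
      by (simp add: t_def)
  qed
  finally show False
    using BNE_interim_nonneg[OF bne i t] by simp
qed

lemma BNE_no_tied_sale:
  assumes bne: "BNE n \<mu> \<sigma>" and fin: "finite (set_pmf \<mu>)" and i: "i < n"
    and j: "j < n" "j \<noteq> i"
    and x: "x \<in> set_pmf \<mu>" and sale: "payoff n (\<lambda>l. \<sigma> l (fst x l)) (snd x) i \<noteq> 0"
  shows "\<sigma> j (fst x j) \<noteq> \<sigma> i (fst x i)"
proof
  assume tie: "\<sigma> j (fst x j) = \<sigma> i (fst x i)"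
  define t where "t = fst x i"
  define pb where "pb = \<sigma> i t"
  define P where "P = cond_pmf \<mu> (sig_event i t)"
  define W where "W = undercut_event n \<sigma> i pb"
  define f where "f y = payoff n (\<lambda>l. \<sigma> l (fst y l)) (snd y) i" for y
  have t: "pos_signal \<mu> i t"
    using x by (auto simp: pos_signal_iff t_def)
  have supp: "set_pmf P = {y \<in> set_pmf \<mu>. fst y i = t}"
    unfolding P_def by (rule set_cond_signal[OF t])
  have pb: "0 < pb"
    unfolding pb_def t_def by (rule BNE_sale_price_pos[OF bne fin i x sale])
  have f_le: "f y \<le> pb * indicator W y" if "fst y i = t" for y
  proof (cases "0 < demand n (\<lambda>l. \<sigma> l (fst y l)) (snd y) i")
    case True
    then have "y \<in> W"
      using demand_pos_iff[OF i] that by (auto simp: W_def mem_undercut_event pb_def)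
    then show ?thesis
      using demand_le_1[OF i] pb that by (simp add: f_def payoff_def pb_def)
  next
    case False
    then have "demand n (\<lambda>l. \<sigma> l (fst y l)) (snd y) i = 0"
      using demand_nonneg by (simp add: order.strict_iff_order)
    then show ?thesis
      using pb by (simp add: f_def payoff_def)
  qed
  have "x \<in> W"
    using sale payoff_nonzero_iff[OF i] by (auto simp: W_def mem_undercut_event pb_def t_def)
  moreover have "f x \<le> pb / 2"
    using demand_tie_le_half[OF i j tie] pb by (simp add: f_def payoff_def pb_def t_def)
  ultimately have f_less: "f x < pb * indicator W x"
    using pb by simp
  have "interim_payoff n \<mu> \<sigma> i t (\<sigma> i t) = measure_pmf.expectation P f"
    unfolding interim_payoff_own_price[OF t] P_def f_def ..
  also have "\<dots> < measure_pmf.expectation P (\<lambda>y. pb * indicator W y)"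
  proof (rule expectation_less_pmf)
    show "finite (set_pmf P)"
      unfolding P_def by (rule finite_cond_signal[OF fin t])
    show "x \<in> set_pmf P"
      using x by (simp add: supp t_def)
  qed (simp_all add: supp f_le f_less)
  also have "\<dots> \<le> interim_payoff n \<mu> \<sigma> i t (\<sigma> i t)"
    using BNE_undercut_bound[OF bne fin i t pb] by (simp add: P_def W_def pb_def)
  finally show False
    by simp
qed

lemma exists_rival: "2 \<le> n \<Longrightarrow> (i::nat) < n \<Longrightarrow> \<exists>j<n. j \<noteq> i"
  by (intro exI[of _ "if i = 0 then 1 else 0"]) auto

lemma BNE_payoff_eq_0:
  assumes n: "2 \<le> n" and bne: "BNE n \<mu> \<sigma>" and fin: "finite (set_pmf \<mu>)"
    and x: "x \<in> set_pmf \<mu>" and i: "i < n"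
  shows "payoff n (\<lambda>j. \<sigma> j (fst x j)) (snd x) i = 0"
proof (rule ccontr)
  define B where "B = {(y, l). y \<in> set_pmf \<mu> \<and> l < n \<and> payoff n (\<lambda>j. \<sigma> j (fst y j)) (snd y) l \<noteq> 0}"
  define price where "price = (\<lambda>(y :: _ \<times> real, l). \<sigma> l (fst y l))"
  assume "payoff n (\<lambda>j. \<sigma> j (fst x j)) (snd x) i \<noteq> 0"
  then have "(x, i) \<in> B"
    using x i by (simp add: B_def)
  moreover have "finite B"
    by (rule finite_subset[of _ "set_pmf \<mu> \<times> {..<n}"]) (auto simp: B_def fin)
  ultimately obtain b where "b \<in> B" and b_top: "\<And>c. c \<in> B \<Longrightarrow> price c \<le> price b"
    using finite_obtains_arg_max[of B price] by blast
  then obtain y k where yk: "(y, k) \<in> B"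
    and top: "\<And>z l. (z, l) \<in> B \<Longrightarrow> \<sigma> l (fst z l) \<le> \<sigma> k (fst y k)"
    by (cases b) (force simp: price_def)
  have y: "y \<in> set_pmf \<mu>" and k: "k < n" and sale: "payoff n (\<lambda>j. \<sigma> j (fst y j)) (snd y) k \<noteq> 0"
    using yk by (auto simp: B_def)
  define pb where "pb = \<sigma> k (fst y k)"
  have pb: "0 < pb"
    unfolding pb_def by (rule BNE_sale_price_pos[OF bne fin k y sale])
  have lowest: "pb \<le> snd y" "\<forall>l<n. pb \<le> \<sigma> l (fst y l)"
    using sale payoff_nonzero_iff[OF k] by (auto simp: pb_def)
  obtain j where j: "j < n" "j \<noteq> k"
    using exists_rival[OF n k] by blast
  have above: "pb < \<sigma> j (fst y j)"
    using lowest(2) j BNE_no_tied_sale[OF bne fin k j y sale] by (force simp: pb_def)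
  have "interim_payoff n \<mu> \<sigma> j (fst y j) (\<sigma> j (fst y j)) = 0"
  proof (rule interim_payoff_own_eq_0)
    show "pos_signal \<mu> j (fst y j)"
      using y by (auto simp: pos_signal_iff)
    show "payoff n (\<lambda>l. \<sigma> l (fst z l)) (snd z) j = 0" if "z \<in> set_pmf \<mu>" "fst z j = fst y j" for z
      using that j top[of z j] above by (force simp: B_def pb_def)
  qed
  moreover have "0 < interim_payoff n \<mu> \<sigma> j (fst y j) (\<sigma> j (fst y j))"
    using lowest by (intro BNE_interim_pos[OF bne fin j(1) y pb]) (simp add: mem_undercut_event)
  ultimately show False
    by simp
qed

lemma BNE_exp_profit_eq_0:
  assumes "2 \<le> n" "BNE n \<mu> \<sigma>" "finite (set_pmf \<mu>)" "i < n"
  shows "exp_profit n \<mu> \<sigma> i = 0"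
proof -
  have "exp_profit n \<mu> \<sigma> i = measure_pmf.expectation \<mu> (\<lambda>_. 0)"
    unfolding exp_profit_def
    by (intro integral_cong_AE AE_pmfI) (auto simp: case_prod_beta BNE_payoff_eq_0[OF assms(1-3) _ assms(4)])
  then show ?thesis
    by simp
qed

lemma BNE_rival_price_nonpos:
  assumes n: "2 \<le> n" and bne: "BNE n \<mu> \<sigma>" and fin: "finite (set_pmf \<mu>)"
    and x: "x \<in> set_pmf \<mu>" "0 < snd x" and i: "i < n"
  shows "\<exists>j<n. j \<noteq> i \<and> \<sigma> j (fst x j) \<le> 0"
proof (rule ccontr)
  assume "\<not> ?thesis"
  then have rivals_pos: "0 < \<sigma> j (fst x j)" if "j < n" "j \<noteq> i" for j
    using that by force
  define pb where "pb = Min (insert (snd x) ((\<lambda>j. \<sigma> j (fst x j)) ` {j. j < n \<and> j \<noteq> i}))"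
  have "0 < pb"
    using rivals_pos x(2) by (auto simp: pb_def)
  moreover have "x \<in> undercut_event n \<sigma> i pb"
    by (auto simp: mem_undercut_event pb_def)
  ultimately have "0 < interim_payoff n \<mu> \<sigma> i (fst x i) (\<sigma> i (fst x i))"
    by (rule BNE_interim_pos[OF bne fin i x(1)])
  moreover have "interim_payoff n \<mu> \<sigma> i (fst x i) (\<sigma> i (fst x i)) = 0"
    using x(1) BNE_payoff_eq_0[OF n bne fin _ i]
    by (intro interim_payoff_own_eq_0) (auto simp: pos_signal_iff)
  ultimately show False
    by simp
qed

lemma BNE_duopoly_price_eq_0:
  assumes bne: "BNE 2 \<mu> \<sigma>" and fin: "finite (set_pmf \<mu>)" and wtp: "\<forall>x\<in>set_pmf \<mu>. 0 < snd x"
    and i: "i < 2" and t: "pos_signal \<mu> i t"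
  shows "\<sigma> i t = 0"
proof (rule ccontr)
  assume "\<sigma> i t \<noteq> 0"
  obtain x where x: "x \<in> set_pmf \<mu>" "fst x i = t"
    using t by (auto simp: pos_signal_iff)
  define p where "p l = \<sigma> l (fst x l)" for l
  have nonpos: "p l \<le> 0" if "l < 2" for l
  proof -
    have "\<exists>j<2. j \<noteq> 1 - l \<and> \<sigma> j (fst x j) \<le> 0"
      using wtp x(1) by (intro BNE_rival_price_nonpos[OF _ bne fin x(1)]) auto
    then obtain j where "j < 2" "j \<noteq> 1 - l" "p j \<le> 0"
      by (auto simp: p_def)
    with that show ?thesis
      by (metis less_2_cases_iff diff_zero diff_self_eq_0 One_nat_def)
  qed
  define l where "l = (if p 0 \<le> p 1 then 0 else 1 :: nat)"
  have lowest: "\<forall>m<2. p l \<le> p m"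
    by (auto simp: l_def less_2_cases_iff)
  have "p l < 0"
    using lowest i nonpos[OF i] \<open>\<sigma> i t \<noteq> 0\<close> x(2) by (force simp: p_def)
  then have "payoff 2 p (snd x) l \<noteq> 0"
    using lowest wtp x(1) by (subst payoff_nonzero_iff) (auto simp: l_def)
  moreover have "payoff 2 p (snd x) l = 0"
    unfolding p_def by (rule BNE_payoff_eq_0[OF _ bne fin x(1)]) (simp_all add: l_def)
  ultimately show False
    by simp
qed

lemma BNE_if_zero_prices:
  assumes n: "2 \<le> n" and fin: "finite (set_pmf \<mu>)"
    and zero: "\<forall>i<n. \<forall>t. pos_signal \<mu> i t \<longrightarrow> \<sigma> i t = 0"
  shows "BNE n \<mu> \<sigma>"
  unfolding BNE_def
proof (intro allI impI)
  fix i t q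
  assume i: "i < n" and t: "pos_signal \<mu> i t"
  obtain j where j: "j < n" "j \<noteq> i"
    using exists_rival[OF n i] by blast
  have "interim_payoff n \<mu> \<sigma> i t q \<le> measure_pmf.expectation (cond_pmf \<mu> (sig_event i t)) (\<lambda>_. 0)"
    unfolding interim_payoff_def
  proof (rule expectation_mono_pmf[OF finite_cond_signal[OF fin t]])
    fix y
    assume "y \<in> set_pmf (cond_pmf \<mu> (sig_event i t))"
    then have "\<sigma> j (fst y j) = 0"
      using zero j by (auto simp: set_cond_signal[OF t] pos_signal_iff)
    then show "(case y of (s, \<omega>) \<Rightarrow> payoff n (\<lambda>l. if l = i then q else \<sigma> l (s l)) \<omega> i) \<le> 0"
      using i j payoff_nonpos[of "\<lambda>l. if l = i then q else \<sigma> l (fst y l)" i n "snd y"]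
        payoff_nonzero_iff[OF i, of "\<lambda>l. if l = i then q else \<sigma> l (fst y l)" "snd y"]
      by (cases "q \<le> 0") (auto simp: case_prod_beta)
  qed
  also have "\<dots> = interim_payoff n \<mu> \<sigma> i t (\<sigma> i t)"
    using zero i t interim_payoff_zero_price by simp
  finally show "interim_payoff n \<mu> \<sigma> i t q \<le> interim_payoff n \<mu> \<sigma> i t (\<sigma> i t)" .
qed

theorem proposition1:
  fixes F :: "real pmf" and \<mu> :: "((nat \<Rightarrow> 's) \<times> real) pmf"
  assumes finite_info: "finite (set_pmf \<mu>)"
    and marginal: "map_pmf snd \<mu> = F"
    and finite_Omega: "finite (set_pmf F)"
    and pos_wtp: "\<forall>\<omega>\<in>set_pmf F. \<omega> > 0"
  shows
    "(\<forall>n\<ge>2. BNE n \<mu> (\<lambda>i t. 0) \<and>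
        (\<forall>\<sigma>. BNE n \<mu> \<sigma> \<longrightarrow> (\<forall>i<n. exp_profit n \<mu> \<sigma> i = 0)))
     \<and> (\<forall>\<sigma>. BNE 2 \<mu> \<sigma> \<longleftrightarrow> (\<forall>i<2. \<forall>t. pos_signal \<mu> i t \<longrightarrow> \<sigma> i t = 0))
     \<and> (\<forall>t. pos_signal \<mu> 0 t \<longrightarrow> (\<exists>p. \<forall>q. monopoly_obj \<mu> t q \<le> monopoly_obj \<mu> t p))
     \<and> (\<forall>\<sigma>. BNE 1 \<mu> \<sigma> \<longleftrightarrow>
          (\<forall>t. pos_signal \<mu> 0 t \<longrightarrow> (\<forall>q. monopoly_obj \<mu> t q \<le> monopoly_obj \<mu> t (\<sigma> 0 t))))"
proof -
  have wtp: "\<forall>x\<in>set_pmf \<mu>. 0 < snd x"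
    using pos_wtp unfolding marginal[symmetric] set_map_pmf by blast
  have "BNE n \<mu> (\<lambda>i t. 0) \<and> (\<forall>\<sigma>. BNE n \<mu> \<sigma> \<longrightarrow> (\<forall>i<n. exp_profit n \<mu> \<sigma> i = 0))"
    if "2 \<le> n" for n
    using that finite_info BNE_exp_profit_eq_0 by (auto intro: BNE_if_zero_prices)
  moreover have "BNE 2 \<mu> \<sigma> \<longleftrightarrow> (\<forall>i<2. \<forall>t. pos_signal \<mu> i t \<longrightarrow> \<sigma> i t = 0)" for \<sigma>
  proof
    assume "BNE 2 \<mu> \<sigma>"
    then show "\<forall>i<2. \<forall>t. pos_signal \<mu> i t \<longrightarrow> \<sigma> i t = 0"
      using BNE_duopoly_price_eq_0[OF _ finite_info wtp] by blast
  qed (intro BNE_if_zero_prices[OF _ finite_info]; simp)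
  moreover have "\<exists>p. \<forall>q. monopoly_obj \<mu> t q \<le> monopoly_obj \<mu> t p" if "pos_signal \<mu> 0 t" for t
    unfolding monopoly_obj_def
    by (intro price_times_survival_has_max finite_cond_signal[OF finite_info that])
  moreover have "BNE 1 \<mu> \<sigma> \<longleftrightarrow>
      (\<forall>t. pos_signal \<mu> 0 t \<longrightarrow> (\<forall>q. monopoly_obj \<mu> t q \<le> monopoly_obj \<mu> t (\<sigma> 0 t)))" for \<sigma>
    unfolding BNE_def interim_payoff_monopoly[of \<mu> \<sigma>, symmetric] by simp
  ultimately show ?thesis
    by blast
qed

end
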